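(* Let $W$ be an affine Weyl group, $x\in W$, $n\ge 3$, and let $r_1,\dots,r_n$ be reflections with $H_{r_t}=H_{\alpha,c+t}$ for some root $\alpha$ and $c\in\mathbb{Z}$, such that $\ell(r_t\cdots r_1x)>\ell(r_{t-1}\cdots r_1x)$ for all $1\le t\le n$. Then $x\in H^{\mathbf 1}_{r_t}$, i.e. $\ell(r_tx)>\ell(x)$, for all $1\le t\le n$.
   Context: $W$ is the affine Weyl group of a crystallographic root system $\Phi$; $H_{\beta,k}=\{v:\langle v,\beta\rangle=k\}$ for $\beta\in\Phi$, $k\in\mathbb{Z}$, and the reflections of $W$ are the orthogonal reflections in these hyperplanes; $H_r$ is the hyperplane of reflection $r$. Elements of $W$ are identified with alcoves. $\ell$ is Coxeter length. For a reflection $r$, $H^{\mathbf 1}_r=\{y:\ell(ry)>\ell(y)\}$ (alcoves on the identity side of $H_r$) and $H^\infty_r=\{y:\ell(ry)<\ell(y)\}$. *)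

theory Defs
  imports "HOL-Analysis.Analysis"
begin

definition lin_refl :: "'a::euclidean_space \<Rightarrow> 'a \<Rightarrow> 'a" where
  "lin_refl \<alpha> v = v - ((2 * (v \<bullet> \<alpha>)) / (\<alpha> \<bullet> \<alpha>)) *\<^sub>R \<alpha>"

definition crystallographic_root_system :: "'a::euclidean_space set \<Rightarrow> bool" where
  "crystallographic_root_system \<Phi> \<longleftrightarrow>
     finite \<Phi> \<and> 0 \<notin> \<Phi> \<and> span \<Phi> = UNIV \<and>
     (\<forall>\<alpha>\<in>\<Phi>. \<forall>\<beta>\<in>\<Phi>. lin_refl \<alpha> \<beta> \<in> \<Phi>) \<and>
     (\<forall>\<alpha>\<in>\<Phi>. \<forall>\<beta>\<in>\<Phi>. (2 * (\<beta> \<bullet> \<alpha>)) / (\<alpha> \<bullet> \<alpha>) \<in> \<int>) \<and>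
     (\<forall>\<alpha>\<in>\<Phi>. \<forall>c::real. c *\<^sub>R \<alpha> \<in> \<Phi> \<longrightarrow> c = 1 \<or> c = -1)"

definition hyp :: "'a::euclidean_space \<Rightarrow> int \<Rightarrow> 'a set" where
  "hyp \<beta> k = {v. v \<bullet> \<beta> = of_int k}"

definition aff_refl :: "'a::euclidean_space \<Rightarrow> int \<Rightarrow> 'a \<Rightarrow> 'a" where
  "aff_refl \<beta> k v = v - ((2 * (v \<bullet> \<beta> - of_int k)) / (\<beta> \<bullet> \<beta>)) *\<^sub>R \<beta>"

definition hyps :: "'a::euclidean_space set \<Rightarrow> 'a set set" where
  "hyps \<Phi> = {hyp \<beta> k | \<beta> k. \<beta> \<in> \<Phi>}"

definition alcove :: "'a::euclidean_space set \<Rightarrow> 'a set \<Rightarrow> bool" where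
  "alcove \<Phi> A \<longleftrightarrow> A \<in> components (UNIV - \<Union>(hyps \<Phi>))"

text \<open>The affine Weyl group: the group (of affine maps) generated by the reflections
  in all hyperplanes H_{beta,k}; since these are involutions, it is the closure of the
  identity under left composition with reflections.\<close>
inductive_set affW :: "'a::euclidean_space set \<Rightarrow> ('a \<Rightarrow> 'a) set" for \<Phi> where
  affW_id: "id \<in> affW \<Phi>"
| affW_step: "w \<in> affW \<Phi> \<Longrightarrow> \<beta> \<in> \<Phi> \<Longrightarrow> aff_refl \<beta> k \<circ> w \<in> affW \<Phi>"

definition wall :: "'a::euclidean_space set \<Rightarrow> 'a set \<Rightarrow> 'a set \<Rightarrow> bool" where
  "wall \<Phi> A0 H \<longleftrightarrow> H \<in> hyps \<Phi> \<and>
     (\<exists>p \<in> H \<inter> closure A0. \<exists>e>0. \<forall>H'\<in>hyps \<Phi>. H' \<noteq> H \<longrightarrow> ball p e \<inter> H' = {})"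

definition simple_refls :: "'a::euclidean_space set \<Rightarrow> 'a set \<Rightarrow> ('a \<Rightarrow> 'a) set" where
  "simple_refls \<Phi> A0 = {aff_refl \<beta> k | \<beta> k. \<beta> \<in> \<Phi> \<and> wall \<Phi> A0 (hyp \<beta> k)}"

definition len :: "'a::euclidean_space set \<Rightarrow> 'a set \<Rightarrow> ('a \<Rightarrow> 'a) \<Rightarrow> nat" where
  "len \<Phi> A0 w = (LEAST n. \<exists>ws. length ws = n \<and> set ws \<subseteq> simple_refls \<Phi> A0 \<and> foldr (\<circ>) ws id = w)"

fun refl_chain :: "'a::euclidean_space \<Rightarrow> int \<Rightarrow> nat \<Rightarrow> ('a \<Rightarrow> 'a) \<Rightarrow> ('a \<Rightarrow> 'a)" where
  "refl_chain \<alpha> c 0 x = x"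
| "refl_chain \<alpha> c (Suc t) x = aff_refl \<alpha> (c + int (Suc t)) \<circ> refl_chain \<alpha> c t x"

end

theory Submission
  imports Defs
begin

(*
  For w in W and a root beta, l(r w) > l(w) for the reflection r in H = H_{beta,k} exactly when
  H does not separate the base alcove A0 from w A0.  If H separates them and s_1 ... s_q is a
  reduced word for w, then H = s_1 ... s_(i-1) H_(s_i) for some i, because the hyperplanes
  separating A0 from w A0 are among those crossed by the gallery of the word; hence
  r w = s_1 ... s_(i-1) s_(i+1) ... s_q is shorter.  Applying this to r w gives the converse.
  Reduced words exist because W is generated by the simple reflections: a reflection r whose
  hyperplane is not a wall of A0 is conjugated by a wall reflection s separating a0 from r a0,
  and s r s is separated from A0 by two hyperplanes fewer.

  With the criterion the statement becomes arithmetic in A = <a0, alpha> and X = <x a0, alpha>: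
  the points r_t ... r_1 x a0 have alpha-coordinates X, 2c + 2 - X, X + 2, ..., and the
  hypotheses for t = 1, 2, 3 force A < c + 1 and X < c + 1, so a0 and x a0 lie on the same side
  of every H_{alpha,c+t} with t >= 1.
*)

lemma aff_refl_inner:
  "aff_refl \<beta> k v \<bullet> \<gamma> = v \<bullet> \<gamma> - (2 * (v \<bullet> \<beta> - of_int k) / (\<beta> \<bullet> \<beta>)) * (\<beta> \<bullet> \<gamma>)"
  by (simp add: aff_refl_def inner_diff_left)

lemma aff_refl_inner_self: "\<beta> \<noteq> 0 \<Longrightarrow> aff_refl \<beta> k v \<bullet> \<beta> = 2 * of_int k - v \<bullet> \<beta>"
  by (simp add: aff_refl_inner)

lemma aff_refl_aff_refl: "\<beta> \<noteq> 0 \<Longrightarrow> aff_refl \<beta> k (aff_refl \<beta> k v) = v"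
  by (simp add: aff_refl_def [of _ _ "aff_refl \<beta> k v"] aff_refl_inner_self algebra_simps)
     (simp add: aff_refl_def diff_divide_distrib algebra_simps)

lemma aff_refl_comp_self: "\<beta> \<noteq> 0 \<Longrightarrow> aff_refl \<beta> k \<circ> aff_refl \<beta> k = id"
  by (simp add: fun_eq_iff aff_refl_aff_refl)

lemma aff_refl_eq_self_iff: "\<beta> \<noteq> 0 \<Longrightarrow> aff_refl \<beta> k v = v \<longleftrightarrow> v \<in> hyp \<beta> k"
  by (auto simp: aff_refl_def hyp_def)

lemma norm_lin_refl: "\<beta> \<noteq> 0 \<Longrightarrow> norm (lin_refl \<beta> w) = norm w"
  by (simp add: norm_eq_sqrt_inner lin_refl_def inner_diff_right inner_commute
      power2_eq_square field_simps)

lemma aff_refl_diff: "aff_refl \<beta> k u - aff_refl \<beta> k v = lin_refl \<beta> (u - v)"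
  by (simp add: aff_refl_def lin_refl_def algebra_simps diff_divide_distrib)

lemma dist_aff_refl: "\<beta> \<noteq> 0 \<Longrightarrow> dist (aff_refl \<beta> k u) (aff_refl \<beta> k v) = dist u v"
  by (simp add: dist_norm aff_refl_diff norm_lin_refl)

lemma aff_refl_convex_comb:
  "aff_refl \<beta> k ((1 - t) *\<^sub>R u + t *\<^sub>R v) = (1 - t) *\<^sub>R aff_refl \<beta> k u + t *\<^sub>R aff_refl \<beta> k v"
  by (simp add: aff_refl_def algebra_simps add_divide_distrib diff_divide_distrib)

lemma hyp_subset_hyp:
  assumes "\<gamma> \<noteq> 0" and "hyp \<gamma> m \<subseteq> hyp \<beta> k"
  obtains l where "\<beta> = l *\<^sub>R \<gamma>" and "of_int k = l * of_int m"
proof -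
  define q where "q = \<gamma> \<bullet> \<gamma>"
  have q: "q \<noteq> 0" using assms(1) by (simp add: q_def)
  define v0 where "v0 = (of_int m / q) *\<^sub>R \<gamma>"
  have v0: "v0 \<in> hyp \<gamma> m" using q by (simp add: v0_def q_def hyp_def)
  then have v0\<beta>: "v0 \<bullet> \<beta> = of_int k" using assms(2) by (auto simp: hyp_def)
  define l where "l = (\<gamma> \<bullet> \<beta>) / q"
  have "u \<bullet> \<beta> = u \<bullet> (l *\<^sub>R \<gamma>)" for u
  proof -
    define u' where "u' = u - ((u \<bullet> \<gamma>) / q) *\<^sub>R \<gamma>"
    have "u' \<bullet> \<gamma> = 0" using q by (simp add: u'_def inner_diff_left q_def)
    then have "v0 + u' \<in> hyp \<gamma> m" using v0 by (simp add: hyp_def inner_add_left)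
    then have "(v0 + u') \<bullet> \<beta> = of_int k" using assms(2) by (auto simp: hyp_def)
    then have "u' \<bullet> \<beta> = 0" using v0\<beta> by (simp add: inner_add_left)
    then have "u \<bullet> \<beta> = ((u \<bullet> \<gamma>) / q) * (\<gamma> \<bullet> \<beta>)" by (simp add: u'_def inner_diff_left)
    then show ?thesis by (simp add: l_def inner_commute)
  qed
  then have "\<beta> = l *\<^sub>R \<gamma>" using vector_eq_ldot by blast
  moreover have "of_int k = l * of_int m" using v0\<beta> v0 calculation by (simp add: hyp_def)
  ultimately show thesis by (rule that)
qed

lemma hyp_subset_hyp_imp_eq:
  assumes "\<gamma> \<noteq> 0" "\<beta> \<noteq> 0" "hyp \<gamma> m \<subseteq> hyp \<beta> k"
  shows "hyp \<gamma> m = hyp \<beta> k"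
proof -
  obtain l where l: "\<beta> = l *\<^sub>R \<gamma>" "of_int k = l * of_int m" using hyp_subset_hyp[OF assms(1,3)] .
  then have "l \<noteq> 0" using assms(2) by auto
  then show ?thesis using l by (auto simp: hyp_def)
qed

lemma aff_refl_eq_if_hyp_eq:
  assumes "\<gamma> \<noteq> 0" "\<beta> \<noteq> 0" "hyp \<gamma> m = hyp \<beta> k"
  shows "aff_refl \<gamma> m = aff_refl \<beta> k"
proof -
  obtain l where l: "\<beta> = l *\<^sub>R \<gamma>" "of_int k = l * of_int m"
    using hyp_subset_hyp[OF assms(1)] assms(3) by blast
  then have "l \<noteq> 0" using assms(2) by auto
  then show ?thesis using assms(1) by (simp add: fun_eq_iff aff_refl_def l field_simps)
qed

lemma aff_refl_inner_lin_refl: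
  "aff_refl \<beta> k u \<bullet> \<gamma> = u \<bullet> lin_refl \<beta> \<gamma> + (2 * (\<gamma> \<bullet> \<beta>) / (\<beta> \<bullet> \<beta>)) * of_int k"
proof -
  have "aff_refl \<beta> k u \<bullet> \<gamma>
      = u \<bullet> \<gamma> - (2 * (u \<bullet> \<beta>) / (\<beta> \<bullet> \<beta>) - 2 * of_int k / (\<beta> \<bullet> \<beta>)) * (\<beta> \<bullet> \<gamma>)"
    by (simp add: aff_refl_inner diff_divide_distrib)
  also have "\<dots> = u \<bullet> lin_refl \<beta> \<gamma> + (2 * (\<gamma> \<bullet> \<beta>) / (\<beta> \<bullet> \<beta>)) * of_int k"
    by (simp add: lin_refl_def inner_commute algebra_simps)
  finally show ?thesis .
qed

lemma aff_refl_diff_scaleR: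
  "aff_refl \<beta> k (w - \<mu> *\<^sub>R \<gamma>) = aff_refl \<beta> k w - \<mu> *\<^sub>R lin_refl \<beta> \<gamma>"
proof -
  have "aff_refl \<beta> k (w - \<mu> *\<^sub>R \<gamma>) - aff_refl \<beta> k w = lin_refl \<beta> (- \<mu> *\<^sub>R \<gamma>)"
    by (simp add: aff_refl_diff)
  also have "\<dots> = - \<mu> *\<^sub>R lin_refl \<beta> \<gamma>"
    by (simp add: lin_refl_def algebra_simps)
  finally show ?thesis by (simp add: algebra_simps)
qed

lemma aff_refl_image_hyp:
  assumes "\<beta> \<noteq> 0" and "of_int m' = of_int m - (2 * (\<gamma> \<bullet> \<beta>) / (\<beta> \<bullet> \<beta>)) * of_int k"
  shows "aff_refl \<beta> k ` hyp \<gamma> m = hyp (lin_refl \<beta> \<gamma>) m'"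
proof -
  have "u \<in> aff_refl \<beta> k ` H \<longleftrightarrow> aff_refl \<beta> k u \<in> H" for u H
    using aff_refl_aff_refl[OF assms(1)] by (metis image_iff)
  then show ?thesis
    unfolding set_eq_iff by (simp add: hyp_def aff_refl_inner_lin_refl assms(2) eq_diff_eq)
qed

lemma aff_refl_conj:
  assumes "\<beta> \<noteq> 0" and m': "of_int m' = of_int m - (2 * (\<gamma> \<bullet> \<beta>) / (\<beta> \<bullet> \<beta>)) * of_int k"
  shows "aff_refl \<beta> k \<circ> aff_refl \<gamma> m \<circ> aff_refl \<beta> k = aff_refl (lin_refl \<beta> \<gamma>) m'"
proof
  fix v
  define u where "u = aff_refl \<beta> k v"
  have norm_eq: "lin_refl \<beta> \<gamma> \<bullet> lin_refl \<beta> \<gamma> = \<gamma> \<bullet> \<gamma>"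
    using norm_lin_refl[OF assms(1), of \<gamma>] by (metis power2_norm_eq_inner)
  have coord: "u \<bullet> \<gamma> - of_int m = v \<bullet> lin_refl \<beta> \<gamma> - of_int m'"
    by (simp add: u_def aff_refl_inner_lin_refl m')
  have "aff_refl \<beta> k (aff_refl \<gamma> m u)
      = aff_refl \<beta> k (u - (2 * (u \<bullet> \<gamma> - of_int m) / (\<gamma> \<bullet> \<gamma>)) *\<^sub>R \<gamma>)"
    by (simp only: aff_refl_def [of \<gamma> m u])
  also have "\<dots> = v - (2 * (u \<bullet> \<gamma> - of_int m) / (\<gamma> \<bullet> \<gamma>)) *\<^sub>R lin_refl \<beta> \<gamma>"
    by (simp add: aff_refl_diff_scaleR u_def aff_refl_aff_refl[OF assms(1)])
  also have "\<dots> = aff_refl (lin_refl \<beta> \<gamma>) m' v"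
    by (simp only: coord norm_eq aff_refl_def)
  finally show "(aff_refl \<beta> k \<circ> aff_refl \<gamma> m \<circ> aff_refl \<beta> k) v = aff_refl (lin_refl \<beta> \<gamma>) m' v"
    by (simp add: u_def)
qed

lemma convex_comb_eq_0_imp_mult_neg:
  fixes F G t :: real
  assumes "(1 - t) * F + t * G = 0" "F \<noteq> 0" "G \<noteq> 0" "0 \<le> t" "t \<le> 1"
  shows "F * G < 0"
proof (rule ccontr)
  assume "\<not> F * G < 0"
  then have FG: "0 < F * G" using assms(2,3) by (simp add: not_less order_le_less)
  have "(1 - t) * (F * F) + t * (F * G) = F * ((1 - t) * F + t * G)" by algebra
  then have sum0: "(1 - t) * (F * F) + t * (F * G) = 0" using assms(1) by simp
  have "0 \<le> (1 - t) * (F * F)" "0 \<le> t * (F * G)" using assms(4,5) FG by simp_all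
  then have "t * (F * G) = 0" "(1 - t) * (F * F) = 0" using sum0 by linarith+
  then show False using FG assms(2) by simp
qed

lemma mult_neg_iff_xor:
  fixes a b c :: real
  assumes "a \<noteq> 0" "b \<noteq> 0" "c \<noteq> 0"
  shows "a * c < 0 \<longleftrightarrow> \<not> (a * b < 0 \<longleftrightarrow> b * c < 0)"
  using assms by (cases "a < 0"; cases "b < 0"; cases "c < 0") (simp_all add: mult_less_0_iff)

lemma closed_segment_meets_hyp_iff:
  assumes "u \<notin> hyp \<beta> k" and "v \<notin> hyp \<beta> k"
  shows "closed_segment u v \<inter> hyp \<beta> k \<noteq> {} \<longleftrightarrow> (u \<bullet> \<beta> - of_int k) * (v \<bullet> \<beta> - of_int k) < 0"
proof
  assume "closed_segment u v \<inter> hyp \<beta> k \<noteq> {}"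
  then obtain t where t: "0 \<le> t" "t \<le> 1" "((1 - t) *\<^sub>R u + t *\<^sub>R v) \<bullet> \<beta> = of_int k"
    by (auto simp: hyp_def in_segment)
  then have "(1 - t) * (u \<bullet> \<beta> - of_int k) + t * (v \<bullet> \<beta> - of_int k) = 0"
    by (simp add: algebra_simps)
  moreover have "u \<bullet> \<beta> - of_int k \<noteq> 0" "v \<bullet> \<beta> - of_int k \<noteq> 0" using assms by (auto simp: hyp_def)
  ultimately show "(u \<bullet> \<beta> - of_int k) * (v \<bullet> \<beta> - of_int k) < 0"
    using t(1,2) by (rule convex_comb_eq_0_imp_mult_neg)
next
  assume "(u \<bullet> \<beta> - of_int k) * (v \<bullet> \<beta> - of_int k) < 0"
  then have "(u \<bullet> \<beta> \<le> of_int k \<and> of_int k \<le> v \<bullet> \<beta>) \<or> (v \<bullet> \<beta> \<le> of_int k \<and> of_int k \<le> u \<bullet> \<beta>)"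
    by (auto simp: mult_less_0_iff)
  then obtain z where "z \<in> closed_segment u v" "\<beta> \<bullet> z = of_int k"
    using connected_ivt_hyperplane[of "closed_segment u v" u v \<beta> "of_int k"]
      connected_ivt_hyperplane[of "closed_segment u v" v u \<beta> "of_int k"]
    by (auto simp: inner_commute)
  then show "closed_segment u v \<inter> hyp \<beta> k \<noteq> {}" by (auto simp: hyp_def inner_commute)
qed

lemma closed_hyp: "closed (hyp \<beta> k)"
  using closed_hyperplane[of \<beta> "of_int k"] by (simp add: hyp_def inner_commute)

lemma negligible_segments_meeting_two_hyps:
  fixes b :: "'a::euclidean_space"
  assumes b: "b \<notin> hyp \<beta> k" "b \<notin> hyp \<gamma> m" and ne: "hyp \<beta> k \<noteq> hyp \<gamma> m"
  shows "negligible {c. closed_segment c b \<inter> hyp \<beta> k \<inter> hyp \<gamma> m \<noteq> {}}"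
proof -
  define f where "f v = v \<bullet> \<beta> - of_int k" for v
  define g where "g v = v \<bullet> \<gamma> - of_int m" for v
  have fb: "f b \<noteq> 0" and gb: "g b \<noteq> 0" using b by (auto simp: f_def g_def hyp_def)
  define a where "a = g b *\<^sub>R \<beta> - f b *\<^sub>R \<gamma>"
  define d where "d = g b * of_int k - f b * of_int m"
  have a_eq: "a \<bullet> c - d = g b * f c - f b * g c" for c
    by (simp add: a_def d_def f_def g_def inner_commute algebra_simps)
  have "{c. closed_segment c b \<inter> hyp \<beta> k \<inter> hyp \<gamma> m \<noteq> {}} \<subseteq> {c. a \<bullet> c = d}"
  proof (intro subsetI CollectI)
    fix c assume "c \<in> {c. closed_segment c b \<inter> hyp \<beta> k \<inter> hyp \<gamma> m \<noteq> {}}"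
    then obtain z where z: "z \<in> closed_segment c b" "z \<in> hyp \<beta> k" "z \<in> hyp \<gamma> m" by blast
    then obtain t where t: "t \<le> 1" "z = (1 - t) *\<^sub>R c + t *\<^sub>R b" by (auto simp: in_segment)
    have "(1 - t) * f c + t * f b = 0" "(1 - t) * g c + t * g b = 0"
      using z(2,3) by (simp_all add: t(2) f_def g_def hyp_def algebra_simps)
    then have "(1 - t) * (g b * f c - f b * g c) = 0" by algebra
    moreover have "t \<noteq> 1" using \<open>(1 - t) * f c + t * f b = 0\<close> fb by auto
    ultimately show "a \<bullet> c = d" using a_eq[of c] by simp
  qed
  moreover have "a \<noteq> 0 \<or> d \<noteq> 0"
  proof (rule ccontr)
    assume "\<not> ?thesis"
    then have "g b * f c = f b * g c" for c using a_eq[of c] by simp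
    then have "f c = 0 \<longleftrightarrow> g c = 0" for c by (metis fb gb mult_eq_0_iff)
    then have "hyp \<beta> k = hyp \<gamma> m" by (auto simp: hyp_def f_def g_def)
    with ne show False ..
  qed
  ultimately show ?thesis using negligible_hyperplane negligible_subset by blast
qed

lemma int_separated:
  fixes x :: real
  obtains \<delta> where "\<delta> > 0" and "\<And>k::int. x \<noteq> of_int k \<Longrightarrow> \<delta> \<le> \<bar>x - of_int k\<bar>"
proof (cases "x = of_int \<lfloor>x\<rfloor>")
  case True
  show thesis
  proof (rule that[of 1])
    fix k :: int assume "x \<noteq> of_int k"
    then have "k \<noteq> \<lfloor>x\<rfloor>" using True by auto
    then have "1 \<le> \<bar>\<lfloor>x\<rfloor> - k\<bar>" by linarith
    then show "1 \<le> \<bar>x - of_int k\<bar>" by (subst True) (metis of_int_1_le_iff of_int_abs of_int_diff)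
  qed simp
next
  case False
  then have "0 < x - of_int \<lfloor>x\<rfloor>" by (simp add: order_less_le)
  moreover have "0 < of_int \<lfloor>x\<rfloor> + 1 - x" by linarith
  ultimately show thesis
  proof (intro that[of "min (x - \<lfloor>x\<rfloor>) (\<lfloor>x\<rfloor> + 1 - x)"])
    fix k :: int
    have "k \<le> \<lfloor>x\<rfloor> \<or> \<lfloor>x\<rfloor> + 1 \<le> k" by linarith
    then have "of_int k \<le> real_of_int \<lfloor>x\<rfloor> \<or> real_of_int \<lfloor>x\<rfloor> + 1 \<le> of_int k"
      by (metis of_int_le_iff of_int_add of_int_1)
    then show "min (x - \<lfloor>x\<rfloor>) (\<lfloor>x\<rfloor> + 1 - x) \<le> \<bar>x - of_int k\<bar>"
      by linarith
  qed simp
qed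

definition prod_word :: "('a \<Rightarrow> 'a) list \<Rightarrow> 'a \<Rightarrow> 'a" where
  "prod_word ws = foldr (\<circ>) ws id"

lemma prod_word_Nil [simp]: "prod_word [] = id"
  and prod_word_Cons [simp]: "prod_word (s # ws) = s \<circ> prod_word ws"
  by (simp_all add: prod_word_def)

lemma prod_word_append [simp]: "prod_word (xs @ ys) = prod_word xs \<circ> prod_word ys"
  by (induction xs) (simp_all add: comp_assoc)

definition mirror :: "('a \<Rightarrow> 'a) \<Rightarrow> 'a set" where
  "mirror s = {v. s v = v}"

lemma mirror_aff_refl: "\<beta> \<noteq> 0 \<Longrightarrow> mirror (aff_refl \<beta> k) = hyp \<beta> k"
  by (auto simp: mirror_def aff_refl_eq_self_iff)

definition gallery_hyps :: "('a \<Rightarrow> 'a) list \<Rightarrow> 'a set set" where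
  "gallery_hyps ws = (\<lambda>i. prod_word (take i ws) ` mirror (ws ! i)) ` {..<length ws}"

lemma gallery_hyps_Nil [simp]: "gallery_hyps [] = {}"
  by (simp add: gallery_hyps_def)

lemma gallery_hyps_snoc:
  "gallery_hyps (ws @ [s]) = insert (prod_word ws ` mirror s) (gallery_hyps ws)"
proof -
  have "(\<lambda>i. prod_word (take i (ws @ [s])) ` mirror ((ws @ [s]) ! i)) ` {..<length ws}
      = (\<lambda>i. prod_word (take i ws) ` mirror (ws ! i)) ` {..<length ws}"
    by (rule image_cong) (simp_all add: nth_append)
  then show ?thesis by (simp add: gallery_hyps_def lessThan_Suc)
qed

lemma refl_chain_in_affW: "x \<in> affW \<Phi> \<Longrightarrow> \<alpha> \<in> \<Phi> \<Longrightarrow> refl_chain \<alpha> c t x \<in> affW \<Phi>"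
  by (induction t) (simp_all add: affW_step)

section \<open>The affine Weyl group\<close>

locale affine_weyl =
  fixes \<Phi> :: "'a::euclidean_space set" and A0 :: "'a set"
  assumes root_system: "crystallographic_root_system \<Phi>" and alcove_A0: "alcove \<Phi> A0"
begin

lemma finite_roots: "finite \<Phi>"
  using root_system by (simp add: crystallographic_root_system_def)

lemma root_nonzero: "\<beta> \<in> \<Phi> \<Longrightarrow> \<beta> \<noteq> 0"
  using root_system by (auto simp: crystallographic_root_system_def)

lemma hyp_in_hyps: "\<beta> \<in> \<Phi> \<Longrightarrow> hyp \<beta> k \<in> hyps \<Phi>"
  by (auto simp: hyps_def)

lemma hypsE:
  assumes "H \<in> hyps \<Phi>"
  obtains \<beta> k where "\<beta> \<in> \<Phi>" "H = hyp \<beta> k"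
  using assms by (auto simp: hyps_def)

lemma aff_refl_conj_root:
  assumes "\<beta> \<in> \<Phi>" "\<gamma> \<in> \<Phi>"
  obtains \<gamma>' m' where "\<gamma>' \<in> \<Phi>" "aff_refl \<beta> k ` hyp \<gamma> m = hyp \<gamma>' m'"
    "aff_refl \<beta> k \<circ> aff_refl \<gamma> m \<circ> aff_refl \<beta> k = aff_refl \<gamma>' m'"
proof -
  have "2 * (\<gamma> \<bullet> \<beta>) / (\<beta> \<bullet> \<beta>) \<in> \<int>" "lin_refl \<beta> \<gamma> \<in> \<Phi>"
    using root_system assms by (auto simp: crystallographic_root_system_def)
  then obtain c where c: "2 * (\<gamma> \<bullet> \<beta>) / (\<beta> \<bullet> \<beta>) = of_int c" by (auto elim: Ints_cases)
  have m': "of_int (m - c * k) = of_int m - (2 * (\<gamma> \<bullet> \<beta>) / (\<beta> \<bullet> \<beta>)) * of_int k" by (simp add: c)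
  show thesis
    by (rule that[OF \<open>lin_refl \<beta> \<gamma> \<in> \<Phi>\<close> aff_refl_image_hyp[OF root_nonzero[OF assms(1)] m']
          aff_refl_conj[OF root_nonzero[OF assms(1)] m']])
qed

lemma aff_refl_image_hyps: "\<beta> \<in> \<Phi> \<Longrightarrow> (`) (aff_refl \<beta> k) ` hyps \<Phi> = hyps \<Phi>"
proof -
  assume \<beta>: "\<beta> \<in> \<Phi>"
  have "aff_refl \<beta> k ` H \<in> hyps \<Phi>" if H: "H \<in> hyps \<Phi>" for H
  proof -
    obtain \<gamma> m where "\<gamma> \<in> \<Phi>" "H = hyp \<gamma> m" using H by (rule hypsE)
    moreover obtain \<gamma>' m' where "\<gamma>' \<in> \<Phi>" "aff_refl \<beta> k ` hyp \<gamma> m = hyp \<gamma>' m'"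
      using aff_refl_conj_root[OF \<beta> \<open>\<gamma> \<in> \<Phi>\<close>] by blast
    ultimately show ?thesis by (simp add: hyp_in_hyps)
  qed
  then have sub: "(`) (aff_refl \<beta> k) ` hyps \<Phi> \<subseteq> hyps \<Phi>" by blast
  moreover have "H \<in> (`) (aff_refl \<beta> k) ` hyps \<Phi>" if "H \<in> hyps \<Phi>" for H
  proof -
    have "H = aff_refl \<beta> k ` (aff_refl \<beta> k ` H)"
      by (simp add: image_comp aff_refl_comp_self root_nonzero[OF \<beta>])
    then show ?thesis using sub that by blast
  qed
  ultimately show ?thesis by blast
qed

lemma affW_image_hyps: "g \<in> affW \<Phi> \<Longrightarrow> (`) g ` hyps \<Phi> = hyps \<Phi>"
proof (induction rule: affW.induct)
  case (affW_step w \<beta> k)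
  have "(`) (aff_refl \<beta> k \<circ> w) ` hyps \<Phi> = (`) (aff_refl \<beta> k) ` ((`) w ` hyps \<Phi>)"
    by (simp add: image_image image_comp)
  then show ?case using affW_step by (simp add: aff_refl_image_hyps)
qed simp

lemma affW_inj: "g \<in> affW \<Phi> \<Longrightarrow> inj g"
proof (induction rule: affW.induct)
  case (affW_step w \<beta> k)
  have "inj (aff_refl \<beta> k)"
    by (rule inj_on_inverseI[where g = "aff_refl \<beta> k"]) (simp add: aff_refl_aff_refl root_nonzero affW_step)
  then show ?case using affW_step.IH by (rule inj_compose)
qed simp

lemma affW_convex_comb:
  "g \<in> affW \<Phi> \<Longrightarrow> g ((1 - t) *\<^sub>R u + t *\<^sub>R v) = (1 - t) *\<^sub>R g u + t *\<^sub>R g v"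
  by (induction rule: affW.induct) (simp_all add: aff_refl_convex_comb)

lemma affW_closed_segment:
  assumes "g \<in> affW \<Phi>"
  shows "g ` closed_segment u v = closed_segment (g u) (g v)"
proof (intro equalityI subsetI)
  fix y assume "y \<in> closed_segment (g u) (g v)"
  then obtain t where "0 \<le> t" "t \<le> 1" "y = (1 - t) *\<^sub>R g u + t *\<^sub>R g v"
    by (auto simp: closed_segment_def)
  then show "y \<in> g ` closed_segment u v"
    by (intro image_eqI[where x = "(1 - t) *\<^sub>R u + t *\<^sub>R v"])
      (auto simp: closed_segment_def affW_convex_comb[OF assms])
qed (auto simp: closed_segment_def affW_convex_comb[OF assms])

lemma affW_conj:
  assumes "g \<in> affW \<Phi>" "\<gamma> \<in> \<Phi>"
  obtains \<gamma>' m' where "\<gamma>' \<in> \<Phi>" "g ` hyp \<gamma> m = hyp \<gamma>' m'" "g \<circ> aff_refl \<gamma> m = aff_refl \<gamma>' m' \<circ> g"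
  using assms(1)
proof (induction arbitrary: thesis rule: affW.induct)
  case affW_id
  then show ?case using assms(2) by auto
next
  case (affW_step w \<beta> k)
  obtain \<gamma>1 m1 where 1: "\<gamma>1 \<in> \<Phi>" "w ` hyp \<gamma> m = hyp \<gamma>1 m1" "w \<circ> aff_refl \<gamma> m = aff_refl \<gamma>1 m1 \<circ> w"
    using affW_step.IH by blast
  obtain \<gamma>2 m2 where 2: "\<gamma>2 \<in> \<Phi>" "aff_refl \<beta> k ` hyp \<gamma>1 m1 = hyp \<gamma>2 m2"
      "aff_refl \<beta> k \<circ> aff_refl \<gamma>1 m1 \<circ> aff_refl \<beta> k = aff_refl \<gamma>2 m2"
    using aff_refl_conj_root[OF \<open>\<beta> \<in> \<Phi>\<close> 1(1)] by blast
  have "(aff_refl \<beta> k \<circ> w) \<circ> aff_refl \<gamma> m = aff_refl \<gamma>2 m2 \<circ> (aff_refl \<beta> k \<circ> w)"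
    unfolding 2(3) [symmetric] using 1(3) root_nonzero[OF \<open>\<beta> \<in> \<Phi>\<close>]
    by (simp add: fun_eq_iff aff_refl_aff_refl)
  moreover have "(aff_refl \<beta> k \<circ> w) ` hyp \<gamma> m = hyp \<gamma>2 m2" using 1(2) 2(2) by (metis image_comp)
  ultimately show ?case using affW_step.prems[OF 2(1)] by blast
qed

lemma aff_refl_in_affW: "\<beta> \<in> \<Phi> \<Longrightarrow> aff_refl \<beta> k \<in> affW \<Phi>"
  using affW_step[OF affW_id] by simp

section \<open>Separating hyperplanes\<close>

definition regular :: "'a \<Rightarrow> bool" where
  "regular v \<longleftrightarrow> v \<notin> \<Union>(hyps \<Phi>)"

lemma regular_not_in_hyp: "regular v \<Longrightarrow> \<beta> \<in> \<Phi> \<Longrightarrow> v \<notin> hyp \<beta> k"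
  by (auto simp: regular_def hyp_in_hyps)

lemma affW_regular:
  assumes "g \<in> affW \<Phi>" "regular v"
  shows "regular (g v)"
proof -
  have "g v \<notin> g ` H" if "H \<in> hyps \<Phi>" for H
    using assms(2) that inj_image_mem_iff[OF affW_inj[OF assms(1)]] by (auto simp: regular_def)
  then show ?thesis
    unfolding regular_def by (subst affW_image_hyps[OF assms(1), symmetric]) blast
qed

text \<open>For regular endpoints these are the hyperplanes strictly separating \<open>u\<close> from \<open>v\<close>
  (\<open>hyp_in_separating_iff\<close>); for other endpoints they include the hyperplanes through them.\<close>

definition separating :: "'a \<Rightarrow> 'a \<Rightarrow> 'a set set" where
  "separating u v = {H \<in> hyps \<Phi>. closed_segment u v \<inter> H \<noteq> {}}"

lemma separating_commute: "separating u v = separating v u"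
  by (simp add: separating_def closed_segment_commute)

lemma separating_self: "regular u \<Longrightarrow> separating u u = {}"
  by (auto simp: separating_def regular_def)

lemma hyp_in_separating_iff:
  assumes "regular u" "regular v" "\<beta> \<in> \<Phi>"
  shows "hyp \<beta> k \<in> separating u v \<longleftrightarrow> (u \<bullet> \<beta> - of_int k) * (v \<bullet> \<beta> - of_int k) < 0"
proof -
  have "u \<notin> hyp \<beta> k" "v \<notin> hyp \<beta> k" using assms regular_not_in_hyp by blast+
  then show ?thesis by (simp add: separating_def hyp_in_hyps assms(3) closed_segment_meets_hyp_iff)
qed

lemma separating_sym_diff:
  assumes "regular u" "regular v" "regular w"
  shows "separating u w = sym_diff (separating u v) (separating v w)"
proof (intro set_eqI)
  fix H
  show "H \<in> separating u w \<longleftrightarrow> H \<in> sym_diff (separating u v) (separating v w)"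
  proof (cases "H \<in> hyps \<Phi>")
    case True
    then obtain \<beta> k where \<beta>: "\<beta> \<in> \<Phi>" and H: "H = hyp \<beta> k" by (rule hypsE)
    have "x \<bullet> \<beta> - of_int k \<noteq> 0" if "regular x" for x
      using regular_not_in_hyp[OF that \<beta>] by (simp add: hyp_def)
    then have signs: "u \<bullet> \<beta> - of_int k \<noteq> 0" "v \<bullet> \<beta> - of_int k \<noteq> 0" "w \<bullet> \<beta> - of_int k \<noteq> 0"
      using assms by auto
    show ?thesis
      unfolding H Un_iff Diff_iff hyp_in_separating_iff[OF assms(1,3) \<beta>]
        hyp_in_separating_iff[OF assms(1,2) \<beta>] hyp_in_separating_iff[OF assms(2,3) \<beta>]
        mult_neg_iff_xor[OF signs]
      by auto
  qed (auto simp: separating_def)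
qed

lemma finite_separating: "finite (separating u v)"
proof -
  obtain B where B: "\<forall>z\<in>closed_segment u v. norm z \<le> B"
    using bounded_closed_segment bounded_iff by blast
  define N where "N \<beta> = \<lceil>B * norm \<beta>\<rceil>" for \<beta> :: 'a
  have "separating u v \<subseteq> (\<Union>\<beta>\<in>\<Phi>. hyp \<beta> ` {-N \<beta>..N \<beta>})"
  proof
    fix H assume "H \<in> separating u v"
    then obtain \<beta> k z where \<beta>k: "\<beta> \<in> \<Phi>" "H = hyp \<beta> k" and z: "z \<in> closed_segment u v" "z \<bullet> \<beta> = of_int k"
      by (auto simp: separating_def hyps_def hyp_def)
    have "\<bar>of_int k\<bar> \<le> norm z * norm \<beta>" using z(2) Cauchy_Schwarz_ineq2[of z \<beta>] by simp
    also have "\<dots> \<le> B * norm \<beta>" using B z(1) by (simp add: mult_right_mono)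
    finally have "k \<in> {-N \<beta>..N \<beta>}" unfolding N_def by simp linarith
    then show "H \<in> (\<Union>\<beta>\<in>\<Phi>. hyp \<beta> ` {-N \<beta>..N \<beta>})" unfolding \<beta>k(2) using \<beta>k(1) by blast
  qed
  then show ?thesis by (rule finite_subset) (simp add: finite_roots)
qed

lemma affW_separating:
  assumes "g \<in> affW \<Phi>"
  shows "separating (g u) (g v) = (`) g ` separating u v"
proof -
  have meets: "closed_segment (g u) (g v) \<inter> g ` H \<noteq> {} \<longleftrightarrow> closed_segment u v \<inter> H \<noteq> {}" for H
    using affW_inj[OF assms] by (simp add: affW_closed_segment[OF assms, symmetric] image_Int [symmetric])
  have hyps: "g ` H \<in> hyps \<Phi> \<longleftrightarrow> H \<in> hyps \<Phi>" for H
  proof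
    assume "g ` H \<in> hyps \<Phi>"
    then obtain H0 where "H0 \<in> hyps \<Phi>" "g ` H = g ` H0"
      using affW_image_hyps[OF assms] by (metis imageE)
    then show "H \<in> hyps \<Phi>" using inj_image_eq_iff[OF affW_inj[OF assms]] by simp
  next
    assume "H \<in> hyps \<Phi>"
    then show "g ` H \<in> hyps \<Phi>" using affW_image_hyps[OF assms] by blast
  qed
  show ?thesis
  proof (intro equalityI subsetI)
    fix H' assume H': "H' \<in> separating (g u) (g v)"
    then have "H' \<in> (`) g ` hyps \<Phi>" using affW_image_hyps[OF assms] by (simp add: separating_def)
    then obtain H where "H' = g ` H" "H \<in> hyps \<Phi>" by blast
    with H' show "H' \<in> (`) g ` separating u v" by (auto simp: separating_def meets)
  next
    fix H' assume "H' \<in> (`) g ` separating u v"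
    then obtain H where "H \<in> separating u v" "H' = g ` H" by blast
    then show "H' \<in> separating (g u) (g v)" using meets[of H] hyps[of H] by (simp add: separating_def)
  qed
qed

lemma A0_component: "A0 \<in> components (UNIV - \<Union>(hyps \<Phi>))"
  using alcove_A0 by (simp add: alcove_def)

lemma regular_if_in_A0: "a \<in> A0 \<Longrightarrow> regular a"
  using in_components_subset[OF A0_component] by (auto simp: regular_def)

lemma hyps_locally_finite: "\<forall>\<^sub>F y in nhds p. \<forall>\<beta>\<in>\<Phi>. \<forall>k. p \<notin> hyp \<beta> k \<longrightarrow> y \<notin> hyp \<beta> k"
proof (intro eventually_ball_finite ballI finite_roots)
  fix \<beta> assume "\<beta> \<in> \<Phi>"
  obtain \<delta> where \<delta>: "\<delta> > 0" "\<And>k::int. p \<bullet> \<beta> \<noteq> of_int k \<Longrightarrow> \<delta> \<le> \<bar>p \<bullet> \<beta> - of_int k\<bar>"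
    using int_separated by blast
  have "((\<lambda>y. y \<bullet> \<beta>) \<longlongrightarrow> p \<bullet> \<beta>) (nhds p)" by (intro tendsto_intros filterlim_ident)
  then have "\<forall>\<^sub>F y in nhds p. dist (y \<bullet> \<beta>) (p \<bullet> \<beta>) < \<delta>" using \<delta>(1) by (rule tendstoD)
  then show "\<forall>\<^sub>F y in nhds p. \<forall>k. p \<notin> hyp \<beta> k \<longrightarrow> y \<notin> hyp \<beta> k"
  proof eventually_elim
    case (elim y)
    show ?case
    proof (intro allI impI notI)
      fix k assume "p \<notin> hyp \<beta> k" "y \<in> hyp \<beta> k"
      then have "\<delta> \<le> \<bar>p \<bullet> \<beta> - y \<bullet> \<beta>\<bar>" using \<delta>(2)[of k] by (simp add: hyp_def)
      then show False using elim by (simp add: dist_real_def abs_minus_commute)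
    qed
  qed
qed

lemma open_A0: "open A0"
proof -
  have "open (UNIV - \<Union>(hyps \<Phi>))"
  proof (rule openI)
    fix p assume p: "p \<in> UNIV - \<Union>(hyps \<Phi>)"
    have "\<forall>\<^sub>F y in nhds p. y \<in> UNIV - \<Union>(hyps \<Phi>)"
      using hyps_locally_finite[of p]
    proof eventually_elim
      case (elim y)
      have "y \<notin> H" if H: "H \<in> hyps \<Phi>" for H
      proof -
        obtain \<beta> k where "\<beta> \<in> \<Phi>" "H = hyp \<beta> k" using H by (rule hypsE)
        then show ?thesis using elim p H by blast
      qed
      then show ?case by blast
    qed
    then show "\<exists>e>0. ball p e \<subseteq> UNIV - \<Union>(hyps \<Phi>)"
      by (auto simp: eventually_nhds_metric dist_commute)
  qed
  then show ?thesis using open_components A0_component by blast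
qed

definition a0 :: 'a where
  "a0 = (SOME a. a \<in> A0)"

lemma a0_in_A0: "a0 \<in> A0"
  unfolding a0_def using in_components_nonempty[OF A0_component] by (simp add: some_in_eq)

lemma regular_a0: "regular a0"
  using regular_if_in_A0 a0_in_A0 .

lemma separating_A0:
  assumes "a \<in> A0" "b \<in> A0"
  shows "separating a b = {}"
proof (rule ccontr)
  assume "separating a b \<noteq> {}"
  then obtain \<beta> k where \<beta>: "\<beta> \<in> \<Phi>" and "hyp \<beta> k \<in> separating a b"
    by (auto simp: separating_def hyps_def)
  then have "(a \<bullet> \<beta> - of_int k) * (b \<bullet> \<beta> - of_int k) < 0"
    using hyp_in_separating_iff[OF regular_if_in_A0[OF assms(1)] regular_if_in_A0[OF assms(2)] \<beta>]
    by simp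
  then have "(a \<bullet> \<beta> \<le> of_int k \<and> of_int k \<le> b \<bullet> \<beta>) \<or> (b \<bullet> \<beta> \<le> of_int k \<and> of_int k \<le> a \<bullet> \<beta>)"
    by (auto simp: mult_less_0_iff)
  then obtain z where "z \<in> A0" "z \<in> hyp \<beta> k"
    using connected_ivt_hyperplane[OF in_components_connected[OF A0_component] assms, of \<beta> "of_int k"]
      connected_ivt_hyperplane[OF in_components_connected[OF A0_component] assms(2,1), of \<beta> "of_int k"]
    by (auto simp: hyp_def inner_commute)
  then show False using regular_not_in_hyp[OF regular_if_in_A0 \<beta>] by blast
qed

lemma separating_A0_left:
  assumes "a \<in> A0" "regular b"
  shows "separating a b = separating a0 b"
  using separating_sym_diff[OF regular_if_in_A0[OF assms(1)] regular_a0 assms(2)]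
    separating_A0[OF assms(1) a0_in_A0] by simp

lemma simple_reflE:
  assumes "s \<in> simple_refls \<Phi> A0"
  obtains \<gamma> m where "\<gamma> \<in> \<Phi>" "s = aff_refl \<gamma> m" "wall \<Phi> A0 (hyp \<gamma> m)"
  using assms by (auto simp: simple_refls_def)

lemma simple_refl_in_affW: "s \<in> simple_refls \<Phi> A0 \<Longrightarrow> s \<in> affW \<Phi>"
  by (auto elim: simple_reflE intro: aff_refl_in_affW)

lemma simple_refl_involutive: "s \<in> simple_refls \<Phi> A0 \<Longrightarrow> s (s v) = v"
  by (auto elim!: simple_reflE simp: aff_refl_aff_refl root_nonzero)

lemma separating_simple_refl:
  assumes s: "s \<in> simple_refls \<Phi> A0"
  shows "separating a0 (s a0) = {mirror s}"
proof -
  obtain \<gamma> m where \<gamma>: "\<gamma> \<in> \<Phi>" and s_eq: "s = aff_refl \<gamma> m" and wall: "wall \<Phi> A0 (hyp \<gamma> m)"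
    using s by (rule simple_reflE)
  have mirror: "mirror s = hyp \<gamma> m" using s_eq mirror_aff_refl root_nonzero[OF \<gamma>] by simp
  obtain p e where p: "p \<in> hyp \<gamma> m" "p \<in> closure A0" and "e > 0"
    and only: "\<forall>H\<in>hyps \<Phi>. H \<noteq> hyp \<gamma> m \<longrightarrow> ball p e \<inter> H = {}"
    using wall unfolding wall_def by blast
  obtain a where a: "a \<in> A0" "dist a p < e" using p(2) \<open>e > 0\<close> closure_approachable by blast
  have "s p = p" using p(1) by (simp add: s_eq aff_refl_eq_self_iff root_nonzero[OF \<gamma>])
  then have "dist (s a) p = dist a p" using dist_aff_refl[OF root_nonzero[OF \<gamma>], of m a p] s_eq by simp
  then have "closed_segment a (s a) \<subseteq> ball p e"
    using a(2) by (intro closed_segment_subset) (auto simp: dist_commute)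
  then have "separating a (s a) \<subseteq> {hyp \<gamma> m}" using only by (auto simp: separating_def)
  moreover have "hyp \<gamma> m \<in> separating a (s a)"
  proof -
    have "a \<bullet> \<gamma> - of_int m \<noteq> 0" using regular_not_in_hyp[OF regular_if_in_A0[OF a(1)] \<gamma>] by (simp add: hyp_def)
    then have "(a \<bullet> \<gamma> - of_int m) * (s a \<bullet> \<gamma> - of_int m) < 0"
      by (auto simp: s_eq aff_refl_inner_self root_nonzero[OF \<gamma>] mult_less_0_iff)
    then show ?thesis
      using hyp_in_separating_iff[OF regular_if_in_A0[OF a(1)]
          affW_regular[OF simple_refl_in_affW[OF s] regular_if_in_A0[OF a(1)]] \<gamma>] by simp
  qed
  ultimately have sep_a: "separating a (s a) = {mirror s}" unfolding mirror by blast
  have sep_sa: "separating (s a) (s a0) = {}"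
    using affW_separating[OF simple_refl_in_affW[OF s]] separating_A0[OF a(1) a0_in_A0] by simp
  have reg: "regular a" "regular (s a)" "regular (s a0)"
    using regular_if_in_A0[OF a(1)] affW_regular[OF simple_refl_in_affW[OF s]] regular_a0 by auto
  show ?thesis
    using separating_sym_diff[OF regular_a0 reg(1) reg(3)] separating_sym_diff[OF reg]
      sep_a sep_sa separating_A0[OF a0_in_A0 a(1)] by simp
qed

text \<open>By \<open>separating_A0_left\<close> the choice of \<open>a0\<close> in \<open>A0\<close> is immaterial.\<close>

definition inversion_hyps :: "('a \<Rightarrow> 'a) \<Rightarrow> 'a set set" where
  "inversion_hyps w = separating a0 (w a0)"

lemma finite_inversion_hyps: "finite (inversion_hyps w)"
  by (simp add: inversion_hyps_def finite_separating)

lemma hyp_in_inversion_hyps_iff: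
  assumes "w \<in> affW \<Phi>" "\<beta> \<in> \<Phi>"
  shows "hyp \<beta> k \<in> inversion_hyps w \<longleftrightarrow> (a0 \<bullet> \<beta> - of_int k) * (w a0 \<bullet> \<beta> - of_int k) < 0"
  unfolding inversion_hyps_def
  using hyp_in_separating_iff[OF regular_a0 affW_regular[OF assms(1) regular_a0] assms(2)] .

lemma inversion_hyps_simple_comp:
  assumes s: "s \<in> simple_refls \<Phi> A0" and w: "w \<in> affW \<Phi>"
  shows "inversion_hyps (s \<circ> w) = sym_diff {mirror s} ((`) s ` inversion_hyps w)"
proof -
  note s_W = simple_refl_in_affW[OF s]
  have "inversion_hyps (s \<circ> w) = sym_diff (separating a0 (s a0)) (separating (s a0) (s (w a0)))"
    unfolding inversion_hyps_def
    using separating_sym_diff[OF regular_a0 affW_regular[OF s_W regular_a0]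
        affW_regular[OF s_W affW_regular[OF w regular_a0]]] by simp
  then show ?thesis
    by (simp add: separating_simple_refl[OF s] affW_separating[OF s_W] inversion_hyps_def)
qed

lemma inversion_hyps_comp_simple:
  assumes s: "s \<in> simple_refls \<Phi> A0" and w: "w \<in> affW \<Phi>"
  shows "inversion_hyps (w \<circ> s) = sym_diff (inversion_hyps w) {w ` mirror s}"
proof -
  note s_W = simple_refl_in_affW[OF s]
  have "inversion_hyps (w \<circ> s) = sym_diff (separating a0 (w a0)) (separating (w a0) (w (s a0)))"
    unfolding inversion_hyps_def
    using separating_sym_diff[OF regular_a0 affW_regular[OF w regular_a0]
        affW_regular[OF w affW_regular[OF s_W regular_a0]]] by simp
  then show ?thesis
    by (simp add: separating_simple_refl[OF s] affW_separating[OF w] inversion_hyps_def)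
qed

lemma prod_word_in_affW: "set ws \<subseteq> simple_refls \<Phi> A0 \<Longrightarrow> prod_word ws \<in> affW \<Phi>"
proof (induction ws)
  case (Cons s ws)
  then obtain \<gamma> m where "\<gamma> \<in> \<Phi>" "s = aff_refl \<gamma> m" by (auto elim: simple_reflE)
  moreover have "prod_word ws \<in> affW \<Phi>" using Cons by simp
  ultimately show ?case unfolding prod_word_Cons by (simp only: affW_step)
qed (simp add: affW_id)

lemma inversion_hyps_prod_word:
  "set ws \<subseteq> simple_refls \<Phi> A0 \<Longrightarrow> inversion_hyps (prod_word ws) \<subseteq> gallery_hyps ws"
proof (induction ws rule: rev_induct)
  case Nil
  then show ?case by (simp add: inversion_hyps_def separating_self regular_a0)
next
  case (snoc s ws)
  then have ws: "set ws \<subseteq> simple_refls \<Phi> A0" and s: "s \<in> simple_refls \<Phi> A0" by auto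
  have "inversion_hyps (prod_word (ws @ [s]))
      = sym_diff (inversion_hyps (prod_word ws)) {prod_word ws ` mirror s}"
    using inversion_hyps_comp_simple[OF s prod_word_in_affW[OF ws]] by simp
  then show ?case using snoc.IH[OF ws] gallery_hyps_snoc[of ws s] by blast
qed

text \<open>Deletion: if \<open>H = P H\<^sub>s\<close> with \<open>P = s\<^sub>1 \<dots> s\<^bsub>i-1\<^esub>\<close>, then \<open>r\<^sub>H = P s P\<^sup>-\<^sup>1\<close>.\<close>

lemma aff_refl_comp_prod_word:
  assumes ws: "set ws \<subseteq> simple_refls \<Phi> A0" and \<beta>: "\<beta> \<in> \<Phi>" and i: "i < length ws"
    and H: "hyp \<beta> k = prod_word (take i ws) ` mirror (ws ! i)"
  shows "aff_refl \<beta> k \<circ> prod_word ws = prod_word (take i ws @ drop (Suc i) ws)"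
proof -
  define P where "P = prod_word (take i ws)"
  define s where "s = ws ! i"
  have "s \<in> simple_refls \<Phi> A0" using ws i by (auto simp: s_def)
  then obtain \<gamma> m where \<gamma>: "\<gamma> \<in> \<Phi>" "s = aff_refl \<gamma> m" by (auto elim: simple_reflE)
  have P_W: "P \<in> affW \<Phi>" using ws by (auto simp: P_def intro!: prod_word_in_affW dest: in_set_takeD)
  obtain \<gamma>' m' where \<gamma>': "\<gamma>' \<in> \<Phi>" "P ` hyp \<gamma> m = hyp \<gamma>' m'" "P \<circ> s = aff_refl \<gamma>' m' \<circ> P"
    using affW_conj[OF P_W \<gamma>(1)] \<gamma>(2) by metis
  have "hyp \<gamma>' m' = hyp \<beta> k"
    using H \<gamma>'(2) \<gamma>(2) mirror_aff_refl[OF root_nonzero[OF \<gamma>(1)]] by (simp add: P_def s_def)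
  then have "aff_refl \<gamma>' m' = aff_refl \<beta> k"
    by (rule aff_refl_eq_if_hyp_eq[OF root_nonzero[OF \<gamma>'(1)] root_nonzero[OF \<beta>]])
  then have conj: "aff_refl \<beta> k \<circ> P = P \<circ> s" using \<gamma>'(3) by simp
  have "ws = take i ws @ s # drop (Suc i) ws" using i by (simp add: s_def id_take_nth_drop)
  then have "aff_refl \<beta> k \<circ> prod_word ws = (aff_refl \<beta> k \<circ> P) \<circ> s \<circ> prod_word (drop (Suc i) ws)"
    by (metis P_def comp_assoc prod_word_Cons prod_word_append)
  also have "\<dots> = P \<circ> prod_word (drop (Suc i) ws)"
    using simple_refl_involutive[OF \<open>s \<in> simple_refls \<Phi> A0\<close>] by (simp add: conj fun_eq_iff)
  finally show ?thesis by (simp add: P_def)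
qed

text \<open>The points \<open>c\<close> for which \<open>[c, b]\<close> meets two distinct hyperplanes in a common point form a
  negligible set, so the open set \<open>A0\<close> contains a point avoiding them.\<close>

lemma exists_generic_point:
  assumes b: "regular b"
  obtains c where "c \<in> A0"
    and "\<And>H H'. H \<in> separating c b \<Longrightarrow> H' \<in> separating c b \<Longrightarrow> H \<noteq> H'
           \<Longrightarrow> closed_segment c b \<inter> H \<inter> H' = {}"
proof -
  define S where "S = separating a0 b"
  define U where "U = (\<Union>(H, H') \<in> {(H, H'). H \<in> S \<and> H' \<in> S \<and> H \<noteq> H'}.
    {c. closed_segment c b \<inter> H \<inter> H' \<noteq> {}})"
  have "negligible U" unfolding U_def
  proof (intro negligible_Union finite_imageI ballI)
    show "finite {(H, H'). H \<in> S \<and> H' \<in> S \<and> H \<noteq> H'}"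
      by (rule finite_subset[of _ "S \<times> S"]) (auto simp: S_def finite_separating)
  next
    fix X assume "X \<in> (\<lambda>(H, H'). {c. closed_segment c b \<inter> H \<inter> H' \<noteq> {}}) `
      {(H, H'). H \<in> S \<and> H' \<in> S \<and> H \<noteq> H'}"
    then obtain H H' where HH: "H \<in> S" "H' \<in> S" "H \<noteq> H'"
      and X: "X = {c. closed_segment c b \<inter> H \<inter> H' \<noteq> {}}" by blast
    then have "H \<in> hyps \<Phi>" "H' \<in> hyps \<Phi>" by (auto simp: S_def separating_def)
    then obtain \<beta> k \<gamma> m where "\<beta> \<in> \<Phi>" "H = hyp \<beta> k" "\<gamma> \<in> \<Phi>" "H' = hyp \<gamma> m"
      by (metis hypsE)
    then show "negligible X"
      using negligible_segments_meeting_two_hyps[OF regular_not_in_hyp[OF b \<open>\<beta> \<in> \<Phi>\<close>]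
          regular_not_in_hyp[OF b \<open>\<gamma> \<in> \<Phi>\<close>]] HH(3) X by simp
  qed
  then have "\<not> A0 \<subseteq> U"
    using open_not_negligible[OF open_A0] a0_in_A0 negligible_subset by blast
  then obtain c where "c \<in> A0" "c \<notin> U" by blast
  moreover have "separating c b = S"
    using separating_A0_left[OF \<open>c \<in> A0\<close> b] by (simp add: S_def)
  ultimately show thesis
  proof (intro that)
    fix H H' assume "H \<in> separating c b" "H' \<in> separating c b" "H \<noteq> H'"
    then show "closed_segment c b \<inter> H \<inter> H' = {}"
      using \<open>c \<notin> U\<close> \<open>separating c b = S\<close> by (auto simp: U_def)
  qed
qed

lemma closest_crossing_in_closure_A0:
  assumes c: "c \<in> A0" and p: "p \<in> closed_segment c b" "c \<noteq> p"
    and before: "\<And>z. z \<in> closed_segment c b \<Longrightarrow> dist c z < dist c p \<Longrightarrow> regular z"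
  shows "p \<in> closure A0"
proof -
  have "y \<in> A0" if y: "y \<in> open_segment c p" for y
  proof -
    have "closed_segment c p \<subseteq> closed_segment c b" using p(1) by (simp add: subset_closed_segment)
    then have "y \<in> closed_segment c b" using open_closed_segment[OF y] by blast
    then have "closed_segment c y \<subseteq> closed_segment c b" by (simp add: subset_closed_segment)
    moreover have "dist c z < dist c p" if "z \<in> closed_segment c y" for z
      using dist_in_closed_segment[OF that] dist_in_open_segment[OF y] by (simp add: dist_commute)
    ultimately have "closed_segment c y \<subseteq> UNIV - \<Union>(hyps \<Phi>)"
      using before unfolding regular_def by blast
    then have "closed_segment c y \<subseteq> A0"
      using c by (intro components_maximal[OF A0_component]) auto
    then show ?thesis by auto
  qed
  then have "closure (open_segment c p) \<subseteq> closure A0" by (intro closure_mono) blast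
  then show ?thesis using \<open>c \<noteq> p\<close> ends_in_segment(2)[of c p] by auto
qed

text \<open>The point \<open>p\<close> of \<open>[c, b]\<close> nearest to \<open>c\<close> on a hyperplane is its first crossing:
  \<open>[c, p)\<close> stays in \<open>A0\<close>, and by genericity only one hyperplane passes through \<open>p\<close>.\<close>

lemma wall_in_separating:
  assumes c: "c \<in> A0" and ne: "separating c b \<noteq> {}"
    and generic: "\<And>H H'. H \<in> separating c b \<Longrightarrow> H' \<in> separating c b \<Longrightarrow> H \<noteq> H'
           \<Longrightarrow> closed_segment c b \<inter> H \<inter> H' = {}"
  shows "\<exists>H\<in>separating c b. wall \<Phi> A0 H"
proof -
  define X where "X = closed_segment c b \<inter> \<Union>(separating c b)"
  have "closed X"
    unfolding X_def using finite_separating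
    by (intro closed_Int closed_Union) (auto simp: separating_def closed_hyp elim!: hypsE)
  moreover have "X \<noteq> {}" using ne by (auto simp: X_def separating_def)
  ultimately obtain p where "p \<in> X" and p_min: "\<And>z. z \<in> X \<Longrightarrow> dist c p \<le> dist c z"
    using distance_attains_inf by blast
  then obtain H where H: "H \<in> separating c b" "p \<in> H" and p: "p \<in> closed_segment c b"
    by (auto simp: X_def)
  have "H \<in> hyps \<Phi>" using H(1) by (simp add: separating_def)
  have "c \<noteq> p" using regular_if_in_A0[OF c] H \<open>H \<in> hyps \<Phi>\<close> by (auto simp: regular_def)
  have "regular z" if z: "z \<in> closed_segment c b" "dist c z < dist c p" for z
  proof (unfold regular_def, rule notI)
    assume "z \<in> \<Union>(hyps \<Phi>)"
    then have "z \<in> X" using z(1) by (auto simp: X_def separating_def)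
    then show False using p_min z(2) by fastforce
  qed
  then have "p \<in> closure A0" by (rule closest_crossing_in_closure_A0[OF c p \<open>c \<noteq> p\<close>])
  moreover obtain e where "e > 0" and e: "\<And>y \<beta> k. dist y p < e \<Longrightarrow> \<beta> \<in> \<Phi> \<Longrightarrow> p \<notin> hyp \<beta> k \<Longrightarrow> y \<notin> hyp \<beta> k"
    using hyps_locally_finite[of p] unfolding eventually_nhds_metric by blast
  moreover have "ball p e \<inter> H' = {}" if H': "H' \<in> hyps \<Phi>" "H' \<noteq> H" for H'
  proof -
    have "p \<notin> H'" using generic[OF H(1), of H'] H' p H by (auto simp: separating_def)
    moreover obtain \<beta> k where "\<beta> \<in> \<Phi>" "H' = hyp \<beta> k" using H'(1) by (rule hypsE)
    ultimately show ?thesis using e by (auto simp: dist_commute)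
  qed
  ultimately have "wall \<Phi> A0 H"
    unfolding wall_def using \<open>H \<in> hyps \<Phi>\<close> H(2) by blast
  then show ?thesis using H(1) by blast
qed

lemma exists_wall_separating:
  assumes "regular b" "separating a0 b \<noteq> {}"
  obtains \<gamma> m where "\<gamma> \<in> \<Phi>" "wall \<Phi> A0 (hyp \<gamma> m)" "hyp \<gamma> m \<in> separating a0 b"
proof -
  obtain c where c: "c \<in> A0"
    and generic: "\<And>H H'. H \<in> separating c b \<Longrightarrow> H' \<in> separating c b \<Longrightarrow> H \<noteq> H'
           \<Longrightarrow> closed_segment c b \<inter> H \<inter> H' = {}"
    using exists_generic_point[OF assms(1)] by blast
  have "separating c b = separating a0 b" using separating_A0_left[OF c assms(1)] .
  then obtain H where H: "H \<in> separating a0 b" "wall \<Phi> A0 H"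
    using wall_in_separating[OF c _ generic] assms(2) by auto
  then have "H \<in> hyps \<Phi>" by (simp add: separating_def)
  then obtain \<gamma> m where "\<gamma> \<in> \<Phi>" "H = hyp \<gamma> m" by (rule hypsE)
  then show thesis using that H by simp
qed

section \<open>Generation by simple reflections\<close>

lemma hyp_in_inversion_hyps_aff_refl:
  assumes "\<beta> \<in> \<Phi>"
  shows "hyp \<beta> k \<in> inversion_hyps (aff_refl \<beta> k)"
proof -
  have "a0 \<bullet> \<beta> - of_int k \<noteq> 0" using regular_not_in_hyp[OF regular_a0 assms] by (simp add: hyp_def)
  then show ?thesis
    by (auto simp: hyp_in_inversion_hyps_iff[OF aff_refl_in_affW[OF assms] assms]
        aff_refl_inner_self root_nonzero[OF assms] mult_less_0_iff)
qed

lemma aff_refl_image_inversion_hyps: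
  assumes "\<beta> \<in> \<Phi>"
  shows "(`) (aff_refl \<beta> k) ` inversion_hyps (aff_refl \<beta> k) = inversion_hyps (aff_refl \<beta> k)"
  using affW_separating[OF aff_refl_in_affW[OF assms, of k], of a0 "aff_refl \<beta> k a0"]
  by (simp add: inversion_hyps_def aff_refl_aff_refl root_nonzero[OF assms] separating_commute)

lemma aff_refl_image_hyp_neq:
  assumes \<beta>: "\<beta> \<in> \<Phi>" and \<gamma>: "\<gamma> \<in> \<Phi>" and ne: "hyp \<gamma> m \<noteq> hyp \<beta> k"
    and inv: "hyp \<gamma> m \<in> inversion_hyps (aff_refl \<beta> k)"
  shows "aff_refl \<beta> k ` hyp \<gamma> m \<noteq> hyp \<gamma> m"
proof
  assume fixed: "aff_refl \<beta> k ` hyp \<gamma> m = hyp \<gamma> m"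
  show False
  proof (cases "\<beta> \<bullet> \<gamma> = 0")
    case True
    then have "aff_refl \<beta> k a0 \<bullet> \<gamma> = a0 \<bullet> \<gamma>" by (simp add: aff_refl_inner)
    then show False
      using inv by (simp add: hyp_in_inversion_hyps_iff[OF aff_refl_in_affW[OF \<beta>] \<gamma>] mult_less_0_iff)
  next
    case False
    have "hyp \<gamma> m \<subseteq> hyp \<beta> k"
    proof
      fix v assume v: "v \<in> hyp \<gamma> m"
      then have "aff_refl \<beta> k v \<in> hyp \<gamma> m" using fixed by blast
      then have "(2 * (v \<bullet> \<beta> - of_int k) / (\<beta> \<bullet> \<beta>)) * (\<beta> \<bullet> \<gamma>) = 0"
        using v by (simp add: hyp_def aff_refl_inner)
      then show "v \<in> hyp \<beta> k" using False root_nonzero[OF \<beta>] by (simp add: hyp_def)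
    qed
    then show False
      using hyp_subset_hyp_imp_eq[OF root_nonzero[OF \<gamma>] root_nonzero[OF \<beta>]] ne by blast
  qed
qed

lemma inversion_hyps_conj_simple_refl:
  assumes \<beta>: "\<beta> \<in> \<Phi>" and s: "s \<in> simple_refls \<Phi> A0"
    and inv: "mirror s \<in> inversion_hyps (aff_refl \<beta> k)"
    and moved: "aff_refl \<beta> k ` mirror s \<noteq> mirror s"
  shows "inversion_hyps (s \<circ> aff_refl \<beta> k \<circ> s)
    = (`) s ` (inversion_hyps (aff_refl \<beta> k) - {aff_refl \<beta> k ` mirror s}) - {mirror s}"
proof -
  define r where "r = aff_refl \<beta> k"
  define h where "h = mirror s"
  have "r ` h \<in> inversion_hyps r"
    using inv aff_refl_image_inversion_hyps[OF \<beta>] by (auto simp: r_def h_def)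
  have "s ` h = h" by (auto simp: h_def mirror_def)
  have h_in: "h \<in> (`) s ` (inversion_hyps r - {r ` h})"
  proof (rule image_eqI)
    show "h = s ` h" using \<open>s ` h = h\<close> by simp
    show "h \<in> inversion_hyps r - {r ` h}" using inv moved by (simp add: r_def h_def)
  qed
  have rs_W: "r \<circ> s \<in> affW \<Phi>"
    using affW_step[OF simple_refl_in_affW[OF s] \<beta>] by (simp add: r_def)
  have "inversion_hyps (r \<circ> s) = sym_diff (inversion_hyps r) {r ` h}"
    unfolding h_def r_def by (rule inversion_hyps_comp_simple[OF s aff_refl_in_affW[OF \<beta>]])
  also have "\<dots> = inversion_hyps r - {r ` h}" using \<open>r ` h \<in> inversion_hyps r\<close> by auto
  finally have "inversion_hyps (s \<circ> (r \<circ> s)) = sym_diff {h} ((`) s ` (inversion_hyps r - {r ` h}))"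
    unfolding h_def by (simp only: inversion_hyps_simple_comp[OF s rs_W])
  also have "\<dots> = (`) s ` (inversion_hyps r - {r ` h}) - {h}" using h_in by auto
  finally show ?thesis by (simp add: r_def h_def comp_assoc)
qed

lemma card_inversion_hyps_conj_less:
  assumes \<beta>: "\<beta> \<in> \<Phi>" and s: "s \<in> simple_refls \<Phi> A0"
    and inv: "mirror s \<in> inversion_hyps (aff_refl \<beta> k)" and ne: "mirror s \<noteq> hyp \<beta> k"
  shows "card (inversion_hyps (s \<circ> aff_refl \<beta> k \<circ> s)) < card (inversion_hyps (aff_refl \<beta> k))"
proof -
  define N where "N = inversion_hyps (aff_refl \<beta> k)"
  define M where "M = N - {aff_refl \<beta> k ` mirror s}"
  obtain \<gamma> m where \<gamma>: "\<gamma> \<in> \<Phi>" "s = aff_refl \<gamma> m" using s by (rule simple_reflE)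
  then have "mirror s = hyp \<gamma> m" by (simp add: mirror_aff_refl root_nonzero)
  then have moved: "aff_refl \<beta> k ` mirror s \<noteq> mirror s"
    using aff_refl_image_hyp_neq[OF \<beta> \<gamma>(1)] ne inv by simp
  have "finite N" by (simp add: N_def finite_inversion_hyps)
  have "aff_refl \<beta> k ` mirror s \<in> N"
    using inv aff_refl_image_inversion_hyps[OF \<beta>] by (auto simp: N_def)
  have "card ((`) s ` M - {mirror s}) \<le> card ((`) s ` M)" by (rule card_Diff1_le)
  also have "\<dots> \<le> card M" using \<open>finite N\<close> by (simp add: M_def card_image_le)
  also have "\<dots> < card N"
    unfolding M_def using \<open>finite N\<close> \<open>aff_refl \<beta> k ` mirror s \<in> N\<close> by (rule card_Diff1_less)
  finally show ?thesis
    by (simp add: inversion_hyps_conj_simple_refl[OF \<beta> s inv moved] M_def N_def)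
qed

text \<open>Induction on the number of hyperplanes separating \<open>A0\<close> from \<open>r A0\<close>: a wall \<open>H\<^sub>s\<close> of \<open>A0\<close>
  separating them is either \<open>H\<^sub>r\<close> itself, or conjugation by \<open>s\<close> removes \<open>H\<^sub>s\<close> and \<open>r H\<^sub>s\<close>.\<close>

lemma aff_refl_eq_prod_word:
  "\<beta> \<in> \<Phi> \<Longrightarrow> \<exists>ws. set ws \<subseteq> simple_refls \<Phi> A0 \<and> prod_word ws = aff_refl \<beta> k"
proof (induction "card (inversion_hyps (aff_refl \<beta> k))" arbitrary: \<beta> k rule: less_induct)
  case less
  define r where "r = aff_refl \<beta> k"
  have "separating a0 (r a0) \<noteq> {}"
    using hyp_in_inversion_hyps_aff_refl[OF less.prems] by (auto simp: inversion_hyps_def r_def)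
  then obtain \<gamma> m where \<gamma>: "\<gamma> \<in> \<Phi>" "wall \<Phi> A0 (hyp \<gamma> m)" "hyp \<gamma> m \<in> separating a0 (r a0)"
    using exists_wall_separating affW_regular[OF aff_refl_in_affW[OF less.prems] regular_a0]
    unfolding r_def by blast
  define s where "s = aff_refl \<gamma> m"
  have s: "s \<in> simple_refls \<Phi> A0" using \<gamma> by (auto simp: simple_refls_def s_def)
  have mirror_s: "mirror s = hyp \<gamma> m" by (simp add: s_def mirror_aff_refl root_nonzero[OF \<gamma>(1)])
  show ?case
  proof (cases "hyp \<gamma> m = hyp \<beta> k")
    case True
    then have "s = aff_refl \<beta> k"
      unfolding s_def by (rule aff_refl_eq_if_hyp_eq[OF root_nonzero[OF \<gamma>(1)] root_nonzero[OF less.prems]])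
    then show ?thesis using s by (intro exI[of _ "[s]"]) simp
  next
    case False
    obtain \<beta>' k' where "\<beta>' \<in> \<Phi>" and conj: "s \<circ> r \<circ> s = aff_refl \<beta>' k'"
      using aff_refl_conj_root[OF \<gamma>(1) less.prems] by (metis r_def s_def)
    have "card (inversion_hyps (aff_refl \<beta>' k')) < card (inversion_hyps (aff_refl \<beta> k))"
      using card_inversion_hyps_conj_less[OF less.prems s] \<gamma>(3) False
      by (simp add: mirror_s conj [symmetric] r_def inversion_hyps_def)
    then obtain ws where ws: "set ws \<subseteq> simple_refls \<Phi> A0" "prod_word ws = aff_refl \<beta>' k'"
      using less.hyps[OF _ \<open>\<beta>' \<in> \<Phi>\<close>] by blast
    have "aff_refl \<beta> k = s \<circ> aff_refl \<beta>' k' \<circ> s"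
      using simple_refl_involutive[OF s] by (simp add: conj [symmetric] r_def fun_eq_iff)
    then have "prod_word (s # ws @ [s]) = aff_refl \<beta> k" by (simp add: ws(2) comp_assoc)
    then show ?thesis using s ws(1) by (intro exI[of _ "s # ws @ [s]"]) simp
  qed
qed

lemma affW_eq_prod_word: "w \<in> affW \<Phi> \<Longrightarrow> \<exists>ws. set ws \<subseteq> simple_refls \<Phi> A0 \<and> prod_word ws = w"
proof (induction rule: affW.induct)
  case affW_id
  show ?case by (intro exI[of _ "[]"]) simp
next
  case (affW_step w \<beta> k)
  then obtain ws vs where "set ws \<subseteq> simple_refls \<Phi> A0" "prod_word ws = aff_refl \<beta> k"
    "set vs \<subseteq> simple_refls \<Phi> A0" "prod_word vs = w"
    using aff_refl_eq_prod_word by metis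
  then show ?case by (intro exI[of _ "ws @ vs"]) simp
qed

section \<open>The length criterion\<close>

lemma len_eq_Least:
  "len \<Phi> A0 w = (LEAST n. \<exists>ws. length ws = n \<and> set ws \<subseteq> simple_refls \<Phi> A0 \<and> prod_word ws = w)"
  by (simp add: len_def prod_word_def)

lemma len_le_length: "set ws \<subseteq> simple_refls \<Phi> A0 \<Longrightarrow> len \<Phi> A0 (prod_word ws) \<le> length ws"
  unfolding len_eq_Least by (rule Least_le) blast

lemma reduced_word:
  assumes "w \<in> affW \<Phi>"
  obtains ws where "set ws \<subseteq> simple_refls \<Phi> A0" "prod_word ws = w" "length ws = len \<Phi> A0 w"
proof -
  have "\<exists>n ws. length ws = n \<and> set ws \<subseteq> simple_refls \<Phi> A0 \<and> prod_word ws = w"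
    using affW_eq_prod_word[OF assms] by blast
  from LeastI_ex[OF this] show thesis using that unfolding len_eq_Least by blast
qed

lemma len_aff_refl_comp_less:
  assumes w: "w \<in> affW \<Phi>" and \<beta>: "\<beta> \<in> \<Phi>" and H: "hyp \<beta> k \<in> inversion_hyps w"
  shows "len \<Phi> A0 (aff_refl \<beta> k \<circ> w) < len \<Phi> A0 w"
proof -
  obtain ws where ws: "set ws \<subseteq> simple_refls \<Phi> A0" "prod_word ws = w" "length ws = len \<Phi> A0 w"
    using reduced_word[OF w] .
  then obtain i where i: "i < length ws" "hyp \<beta> k = prod_word (take i ws) ` mirror (ws ! i)"
    using inversion_hyps_prod_word[OF ws(1)] H by (auto simp: gallery_hyps_def)
  let ?vs = "take i ws @ drop (Suc i) ws"
  have "len \<Phi> A0 (aff_refl \<beta> k \<circ> w) = len \<Phi> A0 (prod_word ?vs)"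
    using aff_refl_comp_prod_word[OF ws(1) \<beta> i] ws(2) by simp
  also have "\<dots> \<le> length ?vs"
    using ws(1) by (intro len_le_length) (auto dest: in_set_takeD in_set_dropD)
  also have "\<dots> < len \<Phi> A0 w" using i(1) ws(3) by simp
  finally show ?thesis .
qed

theorem len_less_aff_refl_comp_iff:
  assumes w: "w \<in> affW \<Phi>" and \<beta>: "\<beta> \<in> \<Phi>"
  shows "len \<Phi> A0 w < len \<Phi> A0 (aff_refl \<beta> k \<circ> w) \<longleftrightarrow> hyp \<beta> k \<notin> inversion_hyps w"
proof
  assume "len \<Phi> A0 w < len \<Phi> A0 (aff_refl \<beta> k \<circ> w)"
  then show "hyp \<beta> k \<notin> inversion_hyps w" using len_aff_refl_comp_less[OF w \<beta>] by fastforce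
next
  assume notin: "hyp \<beta> k \<notin> inversion_hyps w"
  have rw: "aff_refl \<beta> k \<circ> w \<in> affW \<Phi>" using affW_step[OF w \<beta>] .
  have "a0 \<bullet> \<beta> - of_int k \<noteq> 0" "w a0 \<bullet> \<beta> - of_int k \<noteq> 0"
    using regular_not_in_hyp[OF regular_a0 \<beta>] regular_not_in_hyp[OF affW_regular[OF w regular_a0] \<beta>]
    by (auto simp: hyp_def)
  then have "hyp \<beta> k \<in> inversion_hyps (aff_refl \<beta> k \<circ> w)"
    using notin by (auto simp: hyp_in_inversion_hyps_iff[OF w \<beta>] hyp_in_inversion_hyps_iff[OF rw \<beta>]
        aff_refl_inner_self root_nonzero[OF \<beta>] mult_less_0_iff not_less linorder_neq_iff)
  then have "len \<Phi> A0 (aff_refl \<beta> k \<circ> (aff_refl \<beta> k \<circ> w)) < len \<Phi> A0 (aff_refl \<beta> k \<circ> w)"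
    by (rule len_aff_refl_comp_less[OF rw \<beta>])
  moreover have "aff_refl \<beta> k \<circ> (aff_refl \<beta> k \<circ> w) = w"
    by (simp add: fun_eq_iff aff_refl_aff_refl root_nonzero[OF \<beta>])
  ultimately show "len \<Phi> A0 w < len \<Phi> A0 (aff_refl \<beta> k \<circ> w)" by simp
qed

corollary len_less_aff_refl_comp_iff_sign:
  assumes "w \<in> affW \<Phi>" "\<beta> \<in> \<Phi>"
  shows "len \<Phi> A0 w < len \<Phi> A0 (aff_refl \<beta> k \<circ> w) \<longleftrightarrow>
    \<not> (a0 \<bullet> \<beta> - of_int k) * (w a0 \<bullet> \<beta> - of_int k) < 0"
  using len_less_aff_refl_comp_iff[OF assms] hyp_in_inversion_hyps_iff[OF assms] by simp

lemma len_refl_chain_Suc_less_iff: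
  assumes "x \<in> affW \<Phi>" "\<alpha> \<in> \<Phi>"
  shows "len \<Phi> A0 (refl_chain \<alpha> c t x) < len \<Phi> A0 (refl_chain \<alpha> c (Suc t) x) \<longleftrightarrow>
    \<not> (a0 \<bullet> \<alpha> - of_int (c + int (Suc t))) * (refl_chain \<alpha> c t x a0 \<bullet> \<alpha> - of_int (c + int (Suc t))) < 0"
  using len_less_aff_refl_comp_iff_sign[OF refl_chain_in_affW[OF assms] assms(2)] by simp

end

lemma sign_conditions_imp_below:
  fixes A X C :: real
  assumes "\<not> (A - (C + 1)) * (X - (C + 1)) < 0"
    and "\<not> (A - (C + 2)) * ((2 * (C + 1) - X) - (C + 2)) < 0"
    and "\<not> (A - (C + 3)) * ((X + 2) - (C + 3)) < 0"
    and "X \<noteq> C + 1" and "A \<noteq> C + 1"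
  shows "A < C + 1 \<and> X < C + 1"
proof -
  have "X < C + 1"
  proof (rule ccontr)
    assume "\<not> X < C + 1"
    with assms(4) have "X > C + 1" by simp
    then have "A \<ge> C + 3" "A \<le> C + 2"
      using assms(2,3) by (auto simp: mult_less_0_iff not_less)
    then show False by simp
  qed
  moreover have "A < C + 1" using assms(1,5) \<open>X < C + 1\<close> by (auto simp: mult_less_0_iff)
  ultimately show ?thesis by simp
qed

theorem proposition4p3:
  fixes \<Phi> :: "'a::euclidean_space set" and A0 :: "'a set"
    and x :: "'a \<Rightarrow> 'a" and n :: nat and \<alpha> :: 'a and c :: int
  assumes "crystallographic_root_system \<Phi>"
    and "alcove \<Phi> A0"
    and "x \<in> affW \<Phi>"
    and "n \<ge> 3"
    and "\<alpha> \<in> \<Phi>"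
    and "\<forall>t\<in>{1..n}. len \<Phi> A0 (refl_chain \<alpha> c t x) > len \<Phi> A0 (refl_chain \<alpha> c (t - 1) x)"
  shows "\<forall>t\<in>{1..n}. len \<Phi> A0 (aff_refl \<alpha> (c + int t) \<circ> x) > len \<Phi> A0 x"
proof -
  interpret affine_weyl \<Phi> A0 using assms(1,2) by unfold_locales
  define A where "A = a0 \<bullet> \<alpha>"
  define X where "X = x a0 \<bullet> \<alpha>"
  have sign: "\<not> (A - of_int (c + int (Suc t))) * (refl_chain \<alpha> c t x a0 \<bullet> \<alpha> - of_int (c + int (Suc t))) < 0"
    if "Suc t \<le> n" for t
    using assms(6) that len_refl_chain_Suc_less_iff[OF assms(3,5)] by (force simp: A_def)
  note inner = aff_refl_inner_self[OF root_nonzero[OF assms(5)]]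
  have "A < of_int c + 1 \<and> X < of_int c + 1"
  proof (rule sign_conditions_imp_below)
    show "\<not> (A - (of_int c + 1)) * (X - (of_int c + 1)) < 0"
      using sign[of 0] assms(4) by (simp add: X_def)
    show "\<not> (A - (of_int c + 2)) * ((2 * (of_int c + 1) - X) - (of_int c + 2)) < 0"
      using sign[of 1] assms(4) by (simp add: X_def inner)
    show "\<not> (A - (of_int c + 3)) * ((X + 2) - (of_int c + 3)) < 0"
      using sign[of 2] assms(4) by (simp add: X_def inner numeral_2_eq_2 numeral_3_eq_3)
    show "X \<noteq> of_int c + 1" "A \<noteq> of_int c + 1"
      using regular_not_in_hyp[OF affW_regular[OF assms(3) regular_a0] assms(5), of "c + 1"]
        regular_not_in_hyp[OF regular_a0 assms(5), of "c + 1"]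
      by (auto simp: X_def A_def hyp_def)
  qed
  then show ?thesis
    using len_less_aff_refl_comp_iff_sign[OF assms(3,5)] by (auto simp: A_def X_def mult_less_0_iff)
qed

end
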